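(* Consider a GND instance, a reply $\varrho$-oracle ($\varrho\ge1$), and a cost sharing mechanism $M$ whose induced GND game admits an $(A,B)$-bounded potential function and is $(\lambda,\mu)$-smooth with $\mu<1/(\varrho\epsilon_1^2)$, where $\epsilon_1=\frac{1+\epsilon}{1-\epsilon}$. Let $Q=\frac{2\epsilon_1NA}{1-\varrho\epsilon_1^2\mu}$, $T=\lceil Q\ln(ABN^{\max_j\alpha_j})\rceil$ and $T'=N\cdot T^2$. Run the randomized-selection variant of Alg-ABRD for $T'$ steps. Then with probability at least $1/2$ its output $p^{t^*}$ satisfies $$C(p^{t^*})\le\frac{2\varrho\epsilon_1^2\lambda}{1-\varrho\epsilon_1^2\mu}\cdot C^*.$$
   Context: GND instance: finite resource set $E$; requests $i \in [N]$, each with a reply collection $P_i \subseteq 2^E$ and a weight vector $w_i \in \mathbb{Z}_{\geq 1}^E$; constants $q \in \mathbb{Z}_{\ge 1}$, $\alpha_1,\dots,\alpha_q > 1$; for each $e$, $\sigma_e \geq 0$ and $\xi_{e,j} \geq 0$ (at least one $\xi_{e,j}>0$), and cost function $F_e(0)=0$, $F_e(l)=\sigma_e+\sum_j \xi_{e,j} l^{\alpha_j}$ for $l>0$. A strategy profile is $p=(p_1,\dots,p_N)\in P = P_1\times\dots\times P_N$; load $l_e^p=\sum_{i: e\in p_i} w_i(e)$; total cost $C(p)=\sum_e F_e(l_e^p)$; $C^*=\min_{p\in P} C(p)$. $(p'_i,p_{-i})$ is $p$ with the $i$-th coordinate replaced by $p'_i$. A reply $\varrho$-oracle, given a reply collection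 $R$ and tolls $\tau:E\to\mathbb{R}_{>0}$, returns $r \in R$ with $\sum_{e\in r}\tau(e) \le \varrho \sum_{e \in r'}\tau(e)$ for all $r'\in R$. A cost sharing mechanism (CSM) $M=\{f_{i,e}\}$ assigns cost shares $f_{i,e}(p) \geq 0$ with $\sum_i f_{i,e}(p) = F_e(l_e^p)$; it is separable and uniform: $f_{i,e}(p)=0$ if $e \notin p_i$, and $f_{i,e}(p)$ depends only on $w_i(e)$ and the multiset of weights of the other players using $e$. Individual cost $C_i(p)=\sum_e f_{i,e}(p)$. The game is $(\lambda,\mu)$-smooth ($\lambda>0$, $0<\mu<1$) if $\sum_i C_i(p'_i,p_{-i}) \le \lambda C(p') + \mu C(p)$ for all $p,p'$. $\Phi:P\to\mathbb{R}_{>0}$ is a potential function if $\Phi(p')-\Phi(p)=C_i(p')-C_i(p)$ whenever $p,p'$ differ only in coordinate $i$; it is $(A,B)$-bounded ($A,B\ge1$) if $\Phi(p)/A \le C(p) \le B\,\Phi(p)$ for all $p$. Randomized-selection variant of Alg-ABRD: fix small $\epsilon>0$. Values $\widetilde f_{i,e}(p)$ are fixed for all $i,e,p$ with $(1-\epsilon) f_{i,e}(p) \le \widetilde f_{i,e}(p) \le (1+\epsilon) f_{i,e}(p)$, and $\widetilde C_i(p)=\sum_e \widetilde f_{i,e}(p)$. Initial profile $p^0$: for each $i$, $p^0_i$ is the oracle's output on $P_i$ with tolls $\tau_i^0(e)=F_e(w_i(e))$. For $t=1,2,\dots$ up to the step budget: for every $i$ compute $p'_i$ with $\widetilde C_i(p'_i,p^{t-1}_{-i})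 \le \varrho\, \widetilde C_i(p''_i,p^{t-1}_{-i})$ for all $p''_i\in P_i$, and let $\delta_i^t=\widetilde C_i(p^{t-1}) - \epsilon_1 \widetilde C_i(p'_i,p^{t-1}_{-i})$. If $\delta_i^t \le 0$ for all $i$, set $p^t=p^{t-1}$ and stop. Otherwise draw $i\in[N]$ uniformly at random; if $\delta_i^t>0$ set $p^t=(p'_i,p^{t-1}_{-i})$, else $p^t=p^{t-1}$. Output a generated profile $p^{t^*}$ of minimum total cost. Probability is over the random player selections. *)

theory Defs
  imports "HOL-Probability.Probability" "HOL-Library.Multiset"
begin

definition profiles :: "nat \<Rightarrow> (nat \<Rightarrow> 'e set set) \<Rightarrow> (nat \<Rightarrow> 'e set) set" where
  "profiles N P = PiE {..<N} P"

definition load :: "nat \<Rightarrow> (nat \<Rightarrow> 'e \<Rightarrow> nat) \<Rightarrow> (nat \<Rightarrow> 'e set) \<Rightarrow> 'e \<Rightarrow> nat" where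
  "load N w p e = (\<Sum>i\<in>{i. i < N \<and> e \<in> p i}. w i e)"

definition gnd_cost :: "nat \<Rightarrow> (nat \<Rightarrow> real) \<Rightarrow> ('e \<Rightarrow> real) \<Rightarrow> ('e \<Rightarrow> nat \<Rightarrow> real) \<Rightarrow> 'e \<Rightarrow> nat \<Rightarrow> real" where
  "gnd_cost q alpha sig xi e l =
     (if l = 0 then 0 else sig e + (\<Sum>j=1..q. xi e j * real l powr alpha j))"

definition total_cost :: "'e set \<Rightarrow> nat \<Rightarrow> (nat \<Rightarrow> 'e \<Rightarrow> nat) \<Rightarrow> ('e \<Rightarrow> nat \<Rightarrow> real) \<Rightarrow> (nat \<Rightarrow> 'e set) \<Rightarrow> real" where
  "total_cost E N w F p = (\<Sum>e\<in>E. F e (load N w p e))"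

definition opt_cost :: "'e set \<Rightarrow> nat \<Rightarrow> (nat \<Rightarrow> 'e set set) \<Rightarrow> (nat \<Rightarrow> 'e \<Rightarrow> nat) \<Rightarrow> ('e \<Rightarrow> nat \<Rightarrow> real) \<Rightarrow> real" where
  "opt_cost E N P w F = Min (total_cost E N w F ` profiles N P)"

definition indiv_cost :: "'e set \<Rightarrow> (nat \<Rightarrow> 'e \<Rightarrow> (nat \<Rightarrow> 'e set) \<Rightarrow> real) \<Rightarrow> nat \<Rightarrow> (nat \<Rightarrow> 'e set) \<Rightarrow> real" where
  "indiv_cost E f i p = (\<Sum>e\<in>E. f i e p)"

definition is_csm :: "'e set \<Rightarrow> nat \<Rightarrow> (nat \<Rightarrow> 'e set set) \<Rightarrow> (nat \<Rightarrow> 'e \<Rightarrow> nat) \<Rightarrow> ('e \<Rightarrow> nat \<Rightarrow> real)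
    \<Rightarrow> (nat \<Rightarrow> 'e \<Rightarrow> (nat \<Rightarrow> 'e set) \<Rightarrow> real) \<Rightarrow> bool" where
  "is_csm E N P w F f \<longleftrightarrow>
     (\<forall>p\<in>profiles N P. \<forall>e\<in>E. (\<forall>i<N. f i e p \<ge> 0) \<and> (\<Sum>i<N. f i e p) = F e (load N w p e)) \<and>
     (\<forall>p\<in>profiles N P. \<forall>i<N. \<forall>e\<in>E. e \<notin> p i \<longrightarrow> f i e p = 0) \<and>
     (\<exists>g. \<forall>p\<in>profiles N P. \<forall>i<N. \<forall>e\<in>E. e \<in> p i \<longrightarrow>
          f i e p = g e (w i e) (image_mset (\<lambda>k. w k e) (mset_set {k. k < N \<and> k \<noteq> i \<and> e \<in> p k})))"

definition is_smooth :: "'e set \<Rightarrow> nat \<Rightarrow> (nat \<Rightarrow> 'e set set) \<Rightarrow> (nat \<Rightarrow> 'e \<Rightarrow> nat) \<Rightarrow> ('e \<Rightarrow> nat \<Rightarrow> real)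
    \<Rightarrow> (nat \<Rightarrow> 'e \<Rightarrow> (nat \<Rightarrow> 'e set) \<Rightarrow> real) \<Rightarrow> real \<Rightarrow> real \<Rightarrow> bool" where
  "is_smooth E N P w F f lam mu \<longleftrightarrow> lam > 0 \<and> 0 < mu \<and> mu < 1 \<and>
     (\<forall>p\<in>profiles N P. \<forall>p'\<in>profiles N P.
        (\<Sum>i<N. indiv_cost E f i (p(i := p' i))) \<le> lam * total_cost E N w F p' + mu * total_cost E N w F p)"

definition is_potential :: "'e set \<Rightarrow> nat \<Rightarrow> (nat \<Rightarrow> 'e set set)
    \<Rightarrow> (nat \<Rightarrow> 'e \<Rightarrow> (nat \<Rightarrow> 'e set) \<Rightarrow> real) \<Rightarrow> ((nat \<Rightarrow> 'e set) \<Rightarrow> real) \<Rightarrow> bool" where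
  "is_potential E N P f Phi \<longleftrightarrow>
     (\<forall>p\<in>profiles N P. Phi p > 0) \<and>
     (\<forall>p\<in>profiles N P. \<forall>p'\<in>profiles N P. \<forall>i<N. (\<forall>j<N. j \<noteq> i \<longrightarrow> p' j = p j) \<longrightarrow>
        Phi p' - Phi p = indiv_cost E f i p' - indiv_cost E f i p)"

definition bounded_potential :: "'e set \<Rightarrow> nat \<Rightarrow> (nat \<Rightarrow> 'e set set) \<Rightarrow> (nat \<Rightarrow> 'e \<Rightarrow> nat) \<Rightarrow> ('e \<Rightarrow> nat \<Rightarrow> real)
    \<Rightarrow> ((nat \<Rightarrow> 'e set) \<Rightarrow> real) \<Rightarrow> real \<Rightarrow> real \<Rightarrow> bool" where
  "bounded_potential E N P w F Phi A B \<longleftrightarrow> A \<ge> 1 \<and> B \<ge> 1 \<and>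
     (\<forall>p\<in>profiles N P. Phi p / A \<le> total_cost E N w F p \<and> total_cost E N w F p \<le> B * Phi p)"

definition reply_oracle_prop :: "real \<Rightarrow> 'e set \<Rightarrow> 'e set set \<Rightarrow> (('e \<Rightarrow> real) \<Rightarrow> 'e set) \<Rightarrow> bool" where
  "reply_oracle_prop rho E R orc \<longleftrightarrow>
     (\<forall>tau. (\<forall>e\<in>E. tau e > 0) \<longrightarrow>
        orc tau \<in> R \<and> (\<forall>r'\<in>R. (\<Sum>e\<in>orc tau. tau e) \<le> rho * (\<Sum>e\<in>r'. tau e)))"

text \<open>One step of the randomized-selection variant of Alg-ABRD: Ct are the approximate individual
  costs, BR p i the computed approximate best reply, i the randomly drawn player.\<close>
definition abrd_step :: "nat \<Rightarrow> (nat \<Rightarrow> (nat \<Rightarrow> 'e set) \<Rightarrow> real) \<Rightarrow> ((nat \<Rightarrow> 'e set) \<Rightarrow> nat \<Rightarrow> 'e set)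
    \<Rightarrow> real \<Rightarrow> (nat \<Rightarrow> 'e set) \<Rightarrow> nat \<Rightarrow> (nat \<Rightarrow> 'e set)" where
  "abrd_step N Ct BR eps1 p i =
     (let delta = (\<lambda>j. Ct j p - eps1 * Ct j (p(j := BR p j))) in
      if (\<forall>j<N. delta j \<le> 0) then p
      else if delta i > 0 then p(i := BR p i) else p)"

primrec abrd_run :: "('p \<Rightarrow> nat \<Rightarrow> 'p) \<Rightarrow> 'p \<Rightarrow> nat list \<Rightarrow> nat \<Rightarrow> 'p" where
  "abrd_run st p0 xs 0 = p0"
| "abrd_run st p0 xs (Suc t) = st (abrd_run st p0 xs t) (xs ! t)"

text \<open>All possible selection sequences of length L (uniform distribution = independent uniform draws).\<close>
definition sel_seqs :: "nat \<Rightarrow> nat \<Rightarrow> nat list set" where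
  "sel_seqs N L = {xs. length xs = L \<and> set xs \<subseteq> {..<N}}"

end

theory Submission
  imports Defs "HOL-Analysis.Convex"
begin

text \<open>Put K = rho eps1^2 lam / (1 - rho eps1^2 mu). In a profile of cost above 2 K C*, the
  potential decreases caused by the approximate best replies of all players add up, by the
  eps-approximation of the cost shares and smoothness against an optimal profile, to at least
  N Phi / Q; so the potential drops by the factor 1 - 1/Q in expectation over the selected player.
  Stopping the potential once the cost reaches 2 K C*, its expectation after T steps is at most
  (1 - 1/Q)^T Phi(p^0) \<le> (1 - 1/Q)^T A rho N^amax C* \<le> rho C* / B, as the oracle replies make
  the initial profile cost at most rho N^amax C*. A profile of cost above 2 K C* has potential
  above 2 K C* / B and K \<ge> rho, so by Markov's inequality at most half of the selection
  sequences keep the cost above 2 K C* for T steps.\<close>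

section \<open>Stopped potentials along selection sequences\<close>

lemma sel_seqs_0: "sel_seqs N 0 = {[]}"
  by (auto simp: sel_seqs_def)

lemma sel_seqs_Suc: "sel_seqs N (Suc L) = (\<lambda>(x, ys). x # ys) ` ({..<N} \<times> sel_seqs N L)"
proof
  show "sel_seqs N (Suc L) \<subseteq> (\<lambda>(x, ys). x # ys) ` ({..<N} \<times> sel_seqs N L)"
  proof
    fix xs assume "xs \<in> sel_seqs N (Suc L)"
    then obtain x ys where "xs = x # ys" "length ys = L" "x < N" "set ys \<subseteq> {..<N}"
      by (cases xs) (auto simp: sel_seqs_def)
    then show "xs \<in> (\<lambda>(x, ys). x # ys) ` ({..<N} \<times> sel_seqs N L)"
      by (auto simp: sel_seqs_def image_iff)
  qed
qed (auto simp: sel_seqs_def)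

lemma inj_on_Cons_pair: "inj_on (\<lambda>(x, ys). x # ys) A"
  by (auto simp: inj_on_def)

lemma finite_sel_seqs: "finite (sel_seqs N L)"
  by (induction L) (auto simp: sel_seqs_0 sel_seqs_Suc)

lemma card_sel_seqs: "card (sel_seqs N L) = N ^ L"
proof (induction L)
  case 0
  then show ?case by (simp add: sel_seqs_0)
next
  case (Suc L)
  have "card (sel_seqs N (Suc L)) = card ({..<N} \<times> sel_seqs N L)"
    unfolding sel_seqs_Suc by (rule card_image[OF inj_on_Cons_pair])
  then show ?case using Suc by (simp add: card_cartesian_product)
qed

lemma sum_sel_seqs_Suc:
  "(\<Sum>xs\<in>sel_seqs N (Suc L). g xs) = (\<Sum>x<N. \<Sum>ys\<in>sel_seqs N L. g (x # ys))"
proof -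
  have "(\<Sum>xs\<in>sel_seqs N (Suc L). g xs) = (\<Sum>(x, ys)\<in>{..<N} \<times> sel_seqs N L. g (x # ys))"
    unfolding sel_seqs_Suc by (subst sum.reindex[OF inj_on_Cons_pair]) (simp add: case_prod_unfold)
  then show ?thesis by (simp add: sum.cartesian_product)
qed

lemma abrd_run_Cons: "abrd_run st p (x # xs) (Suc t) = abrd_run st (st p x) xs t"
  by (induction t) auto

lemma abrd_run_closed:
  assumes "\<And>p x. p \<in> S \<Longrightarrow> x < N \<Longrightarrow> st p x \<in> S"
    and "p \<in> S" "set xs \<subseteq> {..<N}" "t \<le> length xs"
  shows "abrd_run st p xs t \<in> S"
  using assms(4)
proof (induction t)
  case (Suc t)
  then have "xs ! t < N" using assms(3) by (meson Suc_le_lessD lessThan_iff nth_mem subsetD)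
  with Suc show ?case by (auto intro: assms(1))
qed (simp add: assms(2))

lemma all_le_Suc_abrd_run_Cons:
  "(\<forall>t\<le>Suc k. R (abrd_run st p (x # xs) t)) \<longleftrightarrow> R p \<and> (\<forall>t\<le>k. R (abrd_run st (st p x) xs t))"
  by (metis (no_types, opaque_lifting) abrd_run.simps(1) abrd_run_Cons le0 nat.exhaust Suc_le_mono)

text \<open>A potential that shrinks in expectation by the factor r in every bad state, stopped at
  the first good state, has expectation at most r^k times its initial value after k steps.\<close>
lemma sum_stopped_potential_le:
  fixes V :: "'p \<Rightarrow> real"
  assumes V_nonneg: "\<And>p. p \<in> S \<Longrightarrow> V p \<ge> 0"
    and closed: "\<And>p x. p \<in> S \<Longrightarrow> x < N \<Longrightarrow> st p x \<in> S"
    and shrink: "\<And>p. p \<in> S \<Longrightarrow> bad p \<Longrightarrow> (\<Sum>x<N. V (st p x)) \<le> real N * r * V p"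
    and "r \<ge> 0" "p \<in> S" "k \<le> L"
  shows "(\<Sum>xs\<in>sel_seqs N L. if \<forall>t\<le>k. bad (abrd_run st p xs t) then V (abrd_run st p xs k) else 0)
           \<le> real N ^ L * r ^ k * V p"
  using assms(5,6)
proof (induction k arbitrary: p L)
  case 0
  have "(\<Sum>xs\<in>sel_seqs N L. if bad p then V p else 0) \<le> (\<Sum>xs\<in>sel_seqs N L. V p)"
    using V_nonneg[OF 0(1)] by (intro sum_mono) auto
  then show ?case by (simp add: card_sel_seqs cong: if_cong)
next
  case (Suc k)
  then obtain L' where L: "L = Suc L'" and kL: "k \<le> L'" by (cases L) auto
  show ?case
  proof (cases "bad p")
    case True
    have "(\<Sum>xs\<in>sel_seqs N L.
            if \<forall>t\<le>Suc k. bad (abrd_run st p xs t) then V (abrd_run st p xs (Suc k)) else 0)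
        = (\<Sum>x<N. \<Sum>ys\<in>sel_seqs N L'.
             if \<forall>t\<le>k. bad (abrd_run st (st p x) ys t) then V (abrd_run st (st p x) ys k) else 0)"
      unfolding L sum_sel_seqs_Suc all_le_Suc_abrd_run_Cons abrd_run_Cons using True by simp
    also have "\<dots> \<le> (\<Sum>x<N. real N ^ L' * r ^ k * V (st p x))"
      using Suc.IH closed Suc.prems(1) kL by (intro sum_mono) auto
    also have "\<dots> = real N ^ L' * r ^ k * (\<Sum>x<N. V (st p x))"
      by (simp add: sum_distrib_left)
    also have "\<dots> \<le> real N ^ L' * r ^ k * (real N * r * V p)"
      using shrink[OF Suc.prems(1) True] \<open>r \<ge> 0\<close> by (intro mult_left_mono) auto
    finally show ?thesis by (simp add: L mult_ac)
  next
    case False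
    then show ?thesis using V_nonneg[OF Suc.prems(1)] \<open>r \<ge> 0\<close>
      by (simp add: L sum_sel_seqs_Suc all_le_Suc_abrd_run_Cons)
  qed
qed

lemma card_persistently_bad_le:
  fixes V :: "'p \<Rightarrow> real"
  assumes V_nonneg: "\<And>p. p \<in> S \<Longrightarrow> V p \<ge> 0"
    and closed: "\<And>p x. p \<in> S \<Longrightarrow> x < N \<Longrightarrow> st p x \<in> S"
    and shrink: "\<And>p. p \<in> S \<Longrightarrow> bad p \<Longrightarrow> (\<Sum>x<N. V (st p x)) \<le> real N * r * V p"
    and V_bad: "\<And>p. p \<in> S \<Longrightarrow> bad p \<Longrightarrow> m \<le> V p"
    and "r \<ge> 0" "p \<in> S" "k \<le> L"
  shows "real (card {xs\<in>sel_seqs N L. \<forall>t\<le>k. bad (abrd_run st p xs t)}) * m \<le> real N ^ L * r ^ k * V p"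
proof -
  let ?H = "\<lambda>xs. if \<forall>t\<le>k. bad (abrd_run st p xs t) then V (abrd_run st p xs k) else 0"
  define Bd where "Bd = {xs\<in>sel_seqs N L. \<forall>t\<le>k. bad (abrd_run st p xs t)}"
  have run_in: "abrd_run st p xs k \<in> S" if "xs \<in> sel_seqs N L" for xs
    using that \<open>k \<le> L\<close> by (intro abrd_run_closed[OF closed \<open>p \<in> S\<close>]) (auto simp: sel_seqs_def)
  have "real (card Bd) * m = (\<Sum>xs\<in>Bd. m)" by simp
  also have "\<dots> \<le> (\<Sum>xs\<in>Bd. ?H xs)"
    using run_in V_bad by (intro sum_mono) (auto simp: Bd_def)
  also have "\<dots> \<le> (\<Sum>xs\<in>sel_seqs N L. ?H xs)"
    using run_in V_nonneg by (intro sum_mono2[OF finite_sel_seqs]) (auto simp: Bd_def)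
  also have "\<dots> \<le> real N ^ L * r ^ k * V p"
    by (rule sum_stopped_potential_le[OF V_nonneg closed shrink \<open>r \<ge> 0\<close> \<open>p \<in> S\<close> \<open>k \<le> L\<close>])
  finally show ?thesis unfolding Bd_def .
qed

lemma one_minus_inverse_power_mult_le_one:
  fixes Q Z :: real
  assumes "Q \<ge> 1" "Z \<ge> 1" "real T \<ge> Q * ln Z"
  shows "(1 - 1 / Q) ^ T * Z \<le> 1"
proof -
  have "(1 - 1 / Q) ^ T \<le> exp (- (1 / Q)) ^ T"
    using assms(1) exp_ge_add_one_self[of "- (1 / Q)"] by (intro power_mono) auto
  also have "\<dots> = exp (- (real T / Q))" by (simp add: exp_of_nat_mult[symmetric])
  also have "\<dots> \<le> exp (- ln Z)"
    using assms by (simp add: le_divide_eq mult.commute)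
  also have "\<dots> = 1 / Z" using assms(2) by (simp add: exp_minus inverse_eq_divide)
  finally show ?thesis using assms(2) by (simp add: le_divide_eq)
qed

section \<open>Costs of grouped loads\<close>

lemma powr_sum_le_card_powr_sum:
  fixes y :: "'i \<Rightarrow> real"
  assumes fin: "finite I" and ne: "I \<noteq> {}" and pos: "\<And>i. i \<in> I \<Longrightarrow> y i > 0" and a: "a \<ge> 1"
  shows "(\<Sum>i\<in>I. y i) powr a \<le> real (card I) powr (a - 1) * (\<Sum>i\<in>I. y i powr a)"
proof -
  define k where "k = real (card I)"
  have k: "k > 0" using fin ne by (simp add: k_def card_gt_0_iff)
  have "(\<Sum>i\<in>I. (1 / k) *\<^sub>R y i) powr a \<le> (\<Sum>i\<in>I. (1 / k) * y i powr a)"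
    using convex_on_sum[OF fin ne powr_convex[OF a], of "\<lambda>_. 1 / k" y] pos k
    by (auto simp: k_def)
  then have "((\<Sum>i\<in>I. y i) / k) powr a \<le> (\<Sum>i\<in>I. y i powr a) / k"
    by (simp add: sum_distrib_left[symmetric] sum_divide_distrib)
  moreover have "((\<Sum>i\<in>I. y i) / k) powr a = (\<Sum>i\<in>I. y i) powr a / k powr a"
    using pos fin ne k by (simp add: powr_divide sum_pos less_imp_le)
  ultimately have "(\<Sum>i\<in>I. y i) powr a \<le> k powr a / k * (\<Sum>i\<in>I. y i powr a)"
    using k by (simp add: divide_le_eq field_simps)
  then show ?thesis using k by (simp add: k_def powr_diff)
qed

lemma powr_sum_le_powr_sum_bound:
  fixes y :: "'i \<Rightarrow> real"
  assumes "finite I" "I \<noteq> {}" "\<And>i. i \<in> I \<Longrightarrow> y i > 0" "card I \<le> n" "1 \<le> b" "b \<le> a"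
  shows "(\<Sum>i\<in>I. y i) powr b \<le> real n powr (a - 1) * (\<Sum>i\<in>I. y i powr b)"
proof -
  have card_pos: "card I \<ge> 1" using assms(1,2) by (simp add: Suc_le_eq card_gt_0_iff)
  have "real (card I) powr (b - 1) \<le> real n powr (b - 1)"
    using assms(4,5) card_pos by (intro powr_mono2) auto
  also have "\<dots> \<le> real n powr (a - 1)" using assms(4,6) card_pos by (intro powr_mono) auto
  finally have "real (card I) powr (b - 1) \<le> real n powr (a - 1)" .
  then show ?thesis
    using powr_sum_le_card_powr_sum[OF assms(1-3,5)] assms(3)
    by (meson dual_order.trans less_imp_le mult_right_mono powr_ge_zero sum_nonneg)
qed

lemma gnd_cost_sum_le:
  fixes x :: "'i \<Rightarrow> nat"
  assumes fin: "finite I" and ne: "I \<noteq> {}" and card_le: "card I \<le> n"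
    and x_ge: "\<And>i. i \<in> I \<Longrightarrow> x i \<ge> 1" and sig: "sig e \<ge> 0" and a: "a \<ge> 1"
    and coeff: "\<And>j. j \<in> {1..q} \<Longrightarrow> xi e j \<ge> 0 \<and> 1 \<le> alpha j \<and> alpha j \<le> a"
  shows "gnd_cost q alpha sig xi e (\<Sum>i\<in>I. x i)
           \<le> real n powr (a - 1) * (\<Sum>i\<in>I. gnd_cost q alpha sig xi e (x i))"
proof -
  define c where "c = real n powr (a - 1)"
  have k1: "card I \<ge> 1" using fin ne by (simp add: Suc_le_eq card_gt_0_iff)
  have c1: "c \<ge> 1" unfolding c_def using k1 card_le a by (simp add: ge_one_powr_ge_zero)
  have term_le: "real (\<Sum>i\<in>I. x i) powr alpha j \<le> c * (\<Sum>i\<in>I. real (x i) powr alpha j)"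
    if j: "j \<in> {1..q}" for j
    using powr_sum_le_powr_sum_bound[OF fin ne _ card_le, of "\<lambda>i. real (x i)" "alpha j" a] coeff[OF j] x_ge
    by (force simp: c_def)
  have sum_pos: "(\<Sum>i\<in>I. x i) \<noteq> 0" using fin ne x_ge by (simp add: sum_eq_0_iff) force
  have "gnd_cost q alpha sig xi e (\<Sum>i\<in>I. x i)
      = sig e + (\<Sum>j=1..q. xi e j * real (\<Sum>i\<in>I. x i) powr alpha j)"
    using sum_pos by (simp add: gnd_cost_def)
  also have "\<dots> \<le> c * (real (card I) * sig e)
      + (\<Sum>j=1..q. xi e j * (c * (\<Sum>i\<in>I. real (x i) powr alpha j)))"
  proof (rule add_mono)
    have "1 * 1 \<le> c * real (card I)" using c1 k1 by (intro mult_mono) auto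
    then have "1 * sig e \<le> c * real (card I) * sig e" using sig by (intro mult_right_mono) auto
    then show "sig e \<le> c * (real (card I) * sig e)" by (simp add: mult.assoc)
    show "(\<Sum>j=1..q. xi e j * real (\<Sum>i\<in>I. x i) powr alpha j)
        \<le> (\<Sum>j=1..q. xi e j * (c * (\<Sum>i\<in>I. real (x i) powr alpha j)))"
      using term_le coeff by (intro sum_mono mult_left_mono) auto
  qed
  also have "\<dots> = c * (\<Sum>i\<in>I. sig e + (\<Sum>j=1..q. xi e j * real (x i) powr alpha j))"
    by (simp add: sum.distrib sum_distrib_left sum.swap[of _ I] algebra_simps)
  also have "\<dots> = c * (\<Sum>i\<in>I. gnd_cost q alpha sig xi e (x i))"
    by (intro arg_cong[where f = "(*) c"] sum.cong) (auto simp: gnd_cost_def dest: x_ge)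
  finally show ?thesis unfolding c_def .
qed

lemma sum_users_eq_sum_strategies:
  fixes g :: "nat \<Rightarrow> 'e \<Rightarrow> real"
  assumes "finite E" "\<forall>i<N. p i \<subseteq> E"
  shows "(\<Sum>e\<in>E. \<Sum>i\<in>{i. i < N \<and> e \<in> p i}. g i e) = (\<Sum>i<N. \<Sum>e\<in>p i. g i e)"
proof -
  have "(\<Sum>e\<in>E. \<Sum>i\<in>{i. i < N \<and> e \<in> p i}. g i e)
      = (\<Sum>e\<in>E. \<Sum>i<N. if e \<in> p i then g i e else 0)"
    by (rule sum.cong[OF refl]) (simp add: sum.If_cases Collect_conj_eq lessThan_def Int_commute)
  also have "\<dots> = (\<Sum>i<N. \<Sum>e\<in>E. if e \<in> p i then g i e else 0)" by (rule sum.swap)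
  also have "\<dots> = (\<Sum>i<N. \<Sum>e\<in>p i. g i e)"
  proof (rule sum.cong[OF refl])
    fix i assume "i \<in> {..<N}"
    then have "E \<inter> p i = p i" using assms(2) by auto
    then show "(\<Sum>e\<in>E. if e \<in> p i then g i e else 0) = (\<Sum>e\<in>p i. g i e)"
      using assms(1) by (simp add: sum.If_cases Int_def)
  qed
  finally show ?thesis .
qed

lemma measure_pmf_of_set_ge_half:
  assumes "finite S" "S \<noteq> {}" "2 * card (S - X) \<le> card S"
  shows "measure_pmf.prob (pmf_of_set S) X \<ge> 1 / 2"
proof -
  have "card (S \<inter> X) + card (S - X) = card S" using card_Int_Diff[OF assms(1)] by simp
  then have "real (card S) \<le> 2 * real (card (S \<inter> X))" using assms(3) by linarith
  then show ?thesis using assms(1,2) by (simp add: measure_pmf_of_set card_gt_0_iff field_simps)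
qed

locale gnd =
  fixes E :: "'e set" and N :: nat and P :: "nat \<Rightarrow> 'e set set" and w :: "nat \<Rightarrow> 'e \<Rightarrow> nat"
    and q :: nat and alpha :: "nat \<Rightarrow> real" and sig :: "'e \<Rightarrow> real" and xi :: "'e \<Rightarrow> nat \<Rightarrow> real"
    and rho :: real and orc :: "'e set set \<Rightarrow> ('e \<Rightarrow> real) \<Rightarrow> 'e set"
    and f :: "nat \<Rightarrow> 'e \<Rightarrow> (nat \<Rightarrow> 'e set) \<Rightarrow> real"
    and ft :: "nat \<Rightarrow> 'e \<Rightarrow> (nat \<Rightarrow> 'e set) \<Rightarrow> real"
    and BR :: "(nat \<Rightarrow> 'e set) \<Rightarrow> nat \<Rightarrow> 'e set"
    and Phi :: "(nat \<Rightarrow> 'e set) \<Rightarrow> real"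
    and A B lam mu eps eps1 :: real
  assumes finE: "finite E"
    and P_sub: "\<forall>i<N. P i \<subseteq> Pow E \<and> P i \<noteq> {}"
    and w_pos: "\<forall>i<N. \<forall>e\<in>E. w i e \<ge> 1"
    and q_pos: "q \<ge> 1"
    and alpha_gt: "\<forall>j\<in>{1..q}. alpha j > 1"
    and sigma_nn: "\<forall>e\<in>E. sig e \<ge> 0"
    and xi_nn: "\<forall>e\<in>E. \<forall>j\<in>{1..q}. xi e j \<ge> 0"
    and xi_pos: "\<forall>e\<in>E. \<exists>j\<in>{1..q}. xi e j > 0"
    and rho_ge: "rho \<ge> 1"
    and orc: "\<forall>i<N. reply_oracle_prop rho E (P i) (orc (P i))"
    and csm: "is_csm E N P w (gnd_cost q alpha sig xi) f"
    and pot: "is_potential E N P f Phi"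
    and pot_bd: "bounded_potential E N P w (gnd_cost q alpha sig xi) Phi A B"
    and smooth: "is_smooth E N P w (gnd_cost q alpha sig xi) f lam mu"
    and eps: "0 < eps" "eps < 1"
    and eps1_def: "eps1 = (1 + eps) / (1 - eps)"
    and mu_small: "mu < 1 / (rho * eps1\<^sup>2)"
    and ft_approx: "\<forall>p\<in>profiles N P. \<forall>i<N. \<forall>e\<in>E.
                      (1 - eps) * f i e p \<le> ft i e p \<and> ft i e p \<le> (1 + eps) * f i e p"
    and BR_spec: "\<forall>p\<in>profiles N P. \<forall>i<N. BR p i \<in> P i \<and>
                    (\<forall>r\<in>P i. indiv_cost E ft i (p(i := BR p i)) \<le> rho * indiv_cost E ft i (p(i := r)))"
begin

abbreviation "F \<equiv> gnd_cost q alpha sig xi"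
abbreviation "C \<equiv> total_cost E N w F"
abbreviation "Copt \<equiv> opt_cost E N P w F"
abbreviation "Prof \<equiv> profiles N P"
abbreviation "Ci \<equiv> indiv_cost E f"
abbreviation "Ct \<equiv> indiv_cost E ft"
abbreviation "st \<equiv> abrd_step N Ct BR eps1"

definition "gap = 1 - rho * eps1\<^sup>2 * mu"
definition "K = rho * eps1\<^sup>2 * lam / gap"
definition "delta i p = Ct i p - eps1 * Ct i (p(i := BR p i))"
definition "amax = Max (alpha ` {1..q})"
definition "p0 = restrict (\<lambda>i. orc (P i) (\<lambda>e. F e (w i e))) {..<N}"
definition "solo_cost i r = (\<Sum>e\<in>r. F e (w i e))"

lemma eps1_ge_1: "eps1 \<ge> 1"
  using eps by (simp add: eps1_def)

lemma lam_pos: "lam > 0" and mu_pos: "mu > 0"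
  using smooth by (auto simp: is_smooth_def)

lemma A_ge_1: "A \<ge> 1" and B_ge_1: "B \<ge> 1"
  using pot_bd by (auto simp: bounded_potential_def)

lemma rho_eps1_sq_ge_1: "rho * eps1\<^sup>2 \<ge> 1"
proof -
  have "1 * 1 \<le> rho * eps1\<^sup>2" using rho_ge eps1_ge_1 by (intro mult_mono) (auto simp: one_le_power)
  then show ?thesis by simp
qed

lemma gap_pos: "gap > 0" and gap_le_1: "gap \<le> 1"
proof -
  have "rho * eps1\<^sup>2 * mu < 1" using mu_small rho_eps1_sq_ge_1
    by (simp add: less_divide_eq mult.commute)
  then show "gap > 0" by (simp add: gap_def)
  show "gap \<le> 1" using rho_eps1_sq_ge_1 mu_pos by (simp add: gap_def)
qed

lemma K_pos: "K > 0"
  unfolding K_def using gap_pos lam_pos rho_ge eps1_ge_1 by simp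

lemma finite_profiles: "finite Prof"
proof -
  have "\<forall>i<N. finite (P i)" using P_sub finE by (meson finite_Pow_iff rev_finite_subset)
  then show ?thesis unfolding profiles_def by (intro finite_PiE) auto
qed

lemma profiles_nonempty: "Prof \<noteq> {}"
  using P_sub unfolding profiles_def by (auto simp: PiE_eq_empty_iff)

lemma profile_component: "p \<in> Prof \<Longrightarrow> i < N \<Longrightarrow> p i \<in> P i \<and> p i \<subseteq> E"
  using P_sub by (auto simp: profiles_def PiE_def Pi_def)

lemma profile_update: "p \<in> Prof \<Longrightarrow> i < N \<Longrightarrow> r \<in> P i \<Longrightarrow> p(i := r) \<in> Prof"
  unfolding profiles_def by (auto simp: PiE_def Pi_def extensional_def)

lemma step_in_profiles: "p \<in> Prof \<Longrightarrow> x < N \<Longrightarrow> st p x \<in> Prof"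
  using BR_spec profile_update unfolding abrd_step_def by (auto simp: Let_def)

lemma obtain_optimum: obtains ps where "ps \<in> Prof" "C ps = Copt"
proof -
  have "Min (C ` Prof) \<in> C ` Prof"
    using finite_profiles profiles_nonempty by (intro Min_in) auto
  then show ?thesis using that unfolding opt_cost_def by auto
qed

lemma Phi_pos: "p \<in> Prof \<Longrightarrow> Phi p > 0"
  using pot by (auto simp: is_potential_def)

lemma Phi_le: "p \<in> Prof \<Longrightarrow> Phi p \<le> A * C p"
  using pot_bd A_ge_1 by (auto simp: bounded_potential_def divide_le_eq mult.commute)

lemma cost_le_Phi: "p \<in> Prof \<Longrightarrow> C p \<le> B * Phi p"
  using pot_bd by (auto simp: bounded_potential_def)

lemma gnd_cost_nonneg: "e \<in> E \<Longrightarrow> F e l \<ge> 0"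
  using sigma_nn xi_nn by (auto simp: gnd_cost_def intro!: sum_nonneg add_nonneg_nonneg)

lemma gnd_cost_pos: "e \<in> E \<Longrightarrow> l \<ge> 1 \<Longrightarrow> F e l > 0"
proof -
  assume e: "e \<in> E" and l: "l \<ge> 1"
  obtain j where j: "j \<in> {1..q}" "xi e j > 0" using xi_pos e by auto
  have "(\<Sum>j=1..q. xi e j * real l powr alpha j) > 0"
    by (rule sum_pos2[OF _ j(1)]) (use j l xi_nn e in auto)
  then show ?thesis using l sigma_nn e by (simp add: gnd_cost_def add_nonneg_pos)
qed

lemma gnd_cost_mono: "e \<in> E \<Longrightarrow> 1 \<le> a \<Longrightarrow> a \<le> b \<Longrightarrow> F e a \<le> F e b"
  using xi_nn alpha_gt unfolding gnd_cost_def
  by (auto intro!: sum_mono mult_left_mono powr_mono2)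

lemma total_cost_eq_sum_indiv: "p \<in> Prof \<Longrightarrow> C p = (\<Sum>i<N. Ci i p)"
proof -
  assume p: "p \<in> Prof"
  have "C p = (\<Sum>e\<in>E. \<Sum>i<N. f i e p)"
    using csm p unfolding total_cost_def is_csm_def by (auto intro!: sum.cong)
  also have "\<dots> = (\<Sum>i<N. Ci i p)" unfolding indiv_cost_def by (rule sum.swap)
  finally show ?thesis .
qed

lemma total_cost_nonneg: "p \<in> Prof \<Longrightarrow> C p \<ge> 0"
  unfolding total_cost_def using profile_component gnd_cost_nonneg by (auto intro!: sum_nonneg)

lemma opt_cost_nonneg: "Copt \<ge> 0"
  using total_cost_nonneg by (metis obtain_optimum)

lemma approx_indiv_cost_lower: "p \<in> Prof \<Longrightarrow> i < N \<Longrightarrow> (1 - eps) * Ci i p \<le> Ct i p"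
  using ft_approx unfolding indiv_cost_def by (auto simp: sum_distrib_left intro!: sum_mono)

lemma approx_indiv_cost_upper: "p \<in> Prof \<Longrightarrow> i < N \<Longrightarrow> Ct i p \<le> (1 + eps) * Ci i p"
  using ft_approx unfolding indiv_cost_def by (auto simp: sum_distrib_left intro!: sum_mono)

section \<open>Potential decrease\<close>

lemma potential_decrease_ge_delta:
  assumes p: "p \<in> Prof" and x: "x < N"
  shows "Phi p - Phi (st p x) \<ge> delta x p / (1 + eps)"
proof (cases "(\<forall>j<N. delta j p \<le> 0) \<or> delta x p \<le> 0")
  case True
  then have "st p x = p \<and> delta x p \<le> 0"
    using x unfolding abrd_step_def delta_def[abs_def] by (auto simp: Let_def)
  then show ?thesis using eps by (simp add: divide_nonpos_pos)
next
  case False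
  define p' where "p' = p(x := BR p x)"
  have st: "st p x = p'" using False unfolding abrd_step_def delta_def[abs_def] p'_def by (auto simp: Let_def)
  have p': "p' \<in> Prof" using step_in_profiles[OF p x] by (simp add: st)
  have "Phi p' - Phi p = Ci x p' - Ci x p"
    using pot p p' x unfolding is_potential_def p'_def by auto
  moreover have "Ct x p / (1 + eps) \<le> Ci x p"
    using approx_indiv_cost_upper[OF p x] eps by (simp add: divide_le_eq mult.commute)
  moreover have "Ci x p' \<le> Ct x p' / (1 - eps)"
    using approx_indiv_cost_lower[OF p' x] eps by (simp add: le_divide_eq mult.commute)
  moreover have "delta x p / (1 + eps) = Ct x p / (1 + eps) - Ct x p' / (1 - eps)"
  proof -
    have "eps1 / (1 + eps) = 1 / (1 - eps)" using eps by (simp add: eps1_def)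
    then show ?thesis by (simp add: delta_def p'_def diff_divide_distrib times_divide_eq_left[symmetric])
  qed
  ultimately show ?thesis unfolding st by linarith
qed

text \<open>One factor eps1 comes from delta, the other from the ratio of the approximation
  bounds (1 + eps) and (1 - eps).\<close>
lemma delta_ge:
  assumes p: "p \<in> Prof" and x: "x < N" and r: "r \<in> P x"
  shows "delta x p \<ge> (1 - eps) * (Ci x p - rho * eps1\<^sup>2 * Ci x (p(x := r)))"
proof -
  have pr: "p(x := r) \<in> Prof" using profile_update[OF p x r] .
  have "eps1 * Ct x (p(x := BR p x)) \<le> eps1 * (rho * Ct x (p(x := r)))"
    using BR_spec p x r eps1_ge_1 by (intro mult_left_mono) auto
  also have "\<dots> \<le> eps1 * (rho * ((1 + eps) * Ci x (p(x := r))))"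
    using approx_indiv_cost_upper[OF pr x] eps1_ge_1 rho_ge by (intro mult_left_mono) auto
  also have "\<dots> = (1 - eps) * (rho * eps1\<^sup>2 * Ci x (p(x := r)))"
  proof -
    have "eps1 * (1 + eps) = (1 - eps) * eps1\<^sup>2"
      using eps by (simp add: eps1_def power2_eq_square)
    then show ?thesis by (metis mult.assoc mult.left_commute)
  qed
  finally show ?thesis
    using approx_indiv_cost_lower[OF p x] unfolding delta_def by (simp add: right_diff_distrib)
qed

lemma sum_potential_decrease_ge:
  assumes p: "p \<in> Prof" and ps: "ps \<in> Prof"
  shows "(\<Sum>x<N. Phi p - Phi (st p x)) \<ge> (gap * C p - rho * eps1\<^sup>2 * lam * C ps) / eps1"
proof -
  define re where "re = rho * eps1\<^sup>2"
  have eps_ratio: "(1 - eps) / (1 + eps) = 1 / eps1" using eps by (simp add: eps1_def)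
  have smooth_ps: "(\<Sum>x<N. Ci x (p(x := ps x))) \<le> lam * C ps + mu * C p"
    using smooth p ps unfolding is_smooth_def by blast
  have "(\<Sum>x<N. Phi p - Phi (st p x))
      \<ge> (\<Sum>x<N. (1 - eps) / (1 + eps) * (Ci x p - re * Ci x (p(x := ps x))))"
  proof (rule sum_mono)
    fix x assume x: "x \<in> {..<N}"
    have "(1 - eps) * (Ci x p - re * Ci x (p(x := ps x))) / (1 + eps) \<le> delta x p / (1 + eps)"
      using delta_ge[OF p _ profile_component[OF ps, THEN conjunct1]] x eps
      by (intro divide_right_mono) (auto simp: re_def)
    then show "(1 - eps) / (1 + eps) * (Ci x p - re * Ci x (p(x := ps x))) \<le> Phi p - Phi (st p x)"
      using potential_decrease_ge_delta[OF p] x by fastforce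
  qed
  also have "(\<Sum>x<N. (1 - eps) / (1 + eps) * (Ci x p - re * Ci x (p(x := ps x))))
      = (C p - re * (\<Sum>x<N. Ci x (p(x := ps x)))) / eps1"
    unfolding eps_ratio total_cost_eq_sum_indiv[OF p]
    by (simp add: sum_divide_distrib[symmetric] sum_distrib_left[symmetric] sum_subtractf)
  also have "\<dots> \<ge> (C p - re * (lam * C ps + mu * C p)) / eps1"
    using smooth_ps rho_eps1_sq_ge_1 eps1_ge_1
    by (intro divide_right_mono diff_left_mono mult_left_mono) (auto simp: re_def)
  finally show ?thesis by (simp add: gap_def re_def algebra_simps)
qed

lemma potential_shrinks:
  assumes p: "p \<in> Prof" and N: "N > 0" and bad: "C p > 2 * K * Copt"
  shows "(\<Sum>x<N. Phi (st p x)) \<le> real N * (1 - 1 / (2 * eps1 * real N * A / gap)) * Phi p"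
proof -
  obtain ps where ps: "ps \<in> Prof" "C ps = Copt" by (rule obtain_optimum)
  have "gap * Phi p / (2 * eps1 * A) \<le> gap * C p / (2 * eps1)"
    using Phi_le[OF p] A_ge_1 gap_pos eps1_ge_1 by (simp add: divide_le_eq field_simps)
  also have "\<dots> \<le> (gap * C p - rho * eps1\<^sup>2 * lam * C ps) / eps1"
    using bad gap_pos eps1_ge_1 by (simp add: ps(2) K_def field_simps)
  also have "\<dots> \<le> (\<Sum>x<N. Phi p - Phi (st p x))"
    by (rule sum_potential_decrease_ge[OF p ps(1)])
  also have "\<dots> = real N * Phi p - (\<Sum>x<N. Phi (st p x))"
    by (simp add: sum_subtractf)
  moreover have "real N * (1 - 1 / (2 * eps1 * real N * A / gap)) * Phi p
      = real N * Phi p - gap * Phi p / (2 * eps1 * A)"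
    using N A_ge_1 gap_pos eps1_ge_1 by (simp add: field_simps)
  ultimately show ?thesis by linarith
qed

section \<open>Cost of the initial profile\<close>

lemma amax_ge: "j \<in> {1..q} \<Longrightarrow> alpha j \<le> amax"
  unfolding amax_def by (rule Max_ge) auto

lemma amax_gt_1: "amax > 1"
  using amax_ge[of 1] alpha_gt q_pos by force

lemma initial_profile:
  shows "p0 \<in> Prof" and "\<And>i r. i < N \<Longrightarrow> r \<in> P i \<Longrightarrow> solo_cost i (p0 i) \<le> rho * solo_cost i r"
proof -
  have oracle_reply: "orc (P i) (\<lambda>e. F e (w i e)) \<in> P i \<and>
      (\<forall>r\<in>P i. solo_cost i (orc (P i) (\<lambda>e. F e (w i e))) \<le> rho * solo_cost i r)" if i: "i < N" for i
  proof -
    define tau where "tau e = F e (w i e)" for e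
    have "\<forall>e\<in>E. tau e > 0" using gnd_cost_pos w_pos i by (auto simp: tau_def)
    moreover have "reply_oracle_prop rho E (P i) (orc (P i))" using orc i by blast
    ultimately show ?thesis unfolding reply_oracle_prop_def solo_cost_def tau_def[symmetric] by blast
  qed
  show "p0 \<in> Prof" using oracle_reply unfolding p0_def profiles_def by auto
  show "\<And>i r. i < N \<Longrightarrow> r \<in> P i \<Longrightarrow> solo_cost i (p0 i) \<le> rho * solo_cost i r"
    using oracle_reply unfolding p0_def by auto
qed

lemma total_cost_le_solo_costs:
  assumes p: "p \<in> Prof" and N: "N > 0"
  shows "C p \<le> real N powr (amax - 1) * (\<Sum>i<N. solo_cost i (p i))"
proof -
  have sub: "\<forall>i<N. p i \<subseteq> E" using profile_component[OF p] by auto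
  have "C p \<le> (\<Sum>e\<in>E. real N powr (amax - 1) * (\<Sum>i\<in>{i. i < N \<and> e \<in> p i}. F e (w i e)))"
    unfolding total_cost_def
  proof (rule sum_mono)
    fix e assume e: "e \<in> E"
    define I where "I = {i. i < N \<and> e \<in> p i}"
    have load: "load N w p e = (\<Sum>i\<in>I. w i e)" by (simp add: load_def I_def)
    have "card I \<le> N" using card_mono[of "{..<N}" I] by (auto simp: I_def)
    show "F e (load N w p e) \<le> real N powr (amax - 1) * (\<Sum>i\<in>I. F e (w i e))"
    proof (cases "I = {}")
      case False
      show ?thesis unfolding load
        using w_pos sigma_nn xi_nn alpha_gt amax_ge amax_gt_1 e False \<open>card I \<le> N\<close>
        by (intro gnd_cost_sum_le) (auto simp: I_def less_imp_le)
    qed (simp add: load gnd_cost_def)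
  qed
  also have "\<dots> = real N powr (amax - 1) * (\<Sum>i<N. solo_cost i (p i))"
    unfolding sum_distrib_left[symmetric] solo_cost_def using sum_users_eq_sum_strategies[OF finE sub] by simp
  finally show ?thesis .
qed

lemma solo_costs_le_total_cost:
  assumes p: "p \<in> Prof"
  shows "(\<Sum>i<N. solo_cost i (p i)) \<le> real N * C p"
proof -
  have sub: "\<forall>i<N. p i \<subseteq> E" using profile_component[OF p] by auto
  have "(\<Sum>i<N. solo_cost i (p i)) \<le> (\<Sum>i<N. \<Sum>e\<in>p i. F e (load N w p e))"
    unfolding solo_cost_def
  proof (intro sum_mono)
    fix i e assume i: "i \<in> {..<N}" and e: "e \<in> p i"
    have "e \<in> E" "1 \<le> w i e" using sub w_pos i e by auto
    moreover have "w i e \<le> load N w p e" unfolding load_def using i e by (intro member_le_sum) auto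
    ultimately show "F e (w i e) \<le> F e (load N w p e)" by (intro gnd_cost_mono)
  qed
  also have "\<dots> = (\<Sum>e\<in>E. \<Sum>i\<in>{i. i < N \<and> e \<in> p i}. F e (load N w p e))"
    by (rule sum_users_eq_sum_strategies[OF finE sub, symmetric])
  also have "\<dots> \<le> (\<Sum>e\<in>E. real N * F e (load N w p e))"
  proof (rule sum_mono)
    fix e assume e: "e \<in> E"
    have "card {i. i < N \<and> e \<in> p i} \<le> N" using card_mono[of "{..<N}" "{i. i < N \<and> e \<in> p i}"] by auto
    then show "(\<Sum>i\<in>{i. i < N \<and> e \<in> p i}. F e (load N w p e)) \<le> real N * F e (load N w p e)"
      using gnd_cost_nonneg[OF e] by (simp add: mult_right_mono)
  qed
  finally show ?thesis by (simp add: total_cost_def sum_distrib_left)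
qed

text \<open>Each player of p0 pays at most rho times its stand-alone cost under an optimum, and
  stand-alone costs underestimate shared ones; grouping costs the factor N^(amax-1).\<close>
lemma initial_cost_le:
  assumes N: "N > 0"
  shows "C p0 \<le> rho * real N powr amax * Copt"
proof -
  obtain ps where ps: "ps \<in> Prof" "C ps = Copt" by (rule obtain_optimum)
  have "C p0 \<le> real N powr (amax - 1) * (\<Sum>i<N. solo_cost i (p0 i))"
    by (rule total_cost_le_solo_costs[OF initial_profile(1) N])
  also have "\<dots> \<le> real N powr (amax - 1) * (rho * (\<Sum>i<N. solo_cost i (ps i)))"
    using initial_profile(2) profile_component[OF ps(1)]
    by (intro mult_left_mono) (auto simp: sum_distrib_left intro: sum_mono)
  also have "\<dots> \<le> real N powr (amax - 1) * (rho * (real N * Copt))"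
    using solo_costs_le_total_cost[OF ps(1)] rho_ge by (intro mult_left_mono) (auto simp: ps(2))
  also have "\<dots> = rho * real N powr amax * Copt"
    using N by (simp add: powr_diff)
  finally show ?thesis .
qed

lemma lam_plus_mu_ge_1:
  assumes "Copt > 0"
  shows "lam + mu \<ge> 1"
proof -
  obtain ps where ps: "ps \<in> Prof" "C ps = Copt" by (rule obtain_optimum)
  have "(\<Sum>i<N. Ci i (ps(i := ps i))) \<le> lam * C ps + mu * C ps"
    using smooth ps(1) unfolding is_smooth_def by blast
  then have "1 * C ps \<le> (lam + mu) * C ps"
    by (simp add: total_cost_eq_sum_indiv[OF ps(1)] algebra_simps)
  then show ?thesis using assms ps(2) by (simp add: mult_le_cancel_right)
qed

lemma K_ge_rho:
  assumes "Copt > 0"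
  shows "K \<ge> rho"
proof -
  have "gap \<le> 1 - mu" using rho_eps1_sq_ge_1 mu_pos unfolding gap_def by simp
  also have "\<dots> \<le> lam" using lam_plus_mu_ge_1[OF assms] by simp
  also have "\<dots> \<le> eps1\<^sup>2 * lam" using eps1_ge_1 lam_pos by (simp add: one_le_power)
  finally have "rho * gap \<le> rho * eps1\<^sup>2 * lam" using rho_ge by (simp add: mult_left_mono mult.assoc)
  then show ?thesis unfolding K_def using gap_pos by (simp add: le_divide_eq)
qed

section \<open>Convergence of the dynamics\<close>

lemma opt_cost_pos:
  assumes "N > 0" "C p0 > 2 * K * Copt"
  shows "Copt > 0"
proof (rule ccontr)
  assume "\<not> Copt > 0"
  then have "Copt = 0" using opt_cost_nonneg by simp
  then show False using initial_cost_le[OF assms(1)] assms(2) by simp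
qed

lemma Q_ge_1:
  assumes "N > 0"
  shows "2 * eps1 * real N * A / gap \<ge> 1"
proof -
  have "1 * 1 * 1 \<le> 2 * eps1 * real N * A" using eps1_ge_1 assms A_ge_1 by (intro mult_mono) auto
  then show ?thesis using gap_pos gap_le_1 by (simp add: le_divide_eq)
qed

lemma card_persistently_bad_runs_le:
  assumes N: "N > 0" and bad0: "C p0 > 2 * K * Copt"
    and Q: "Q = 2 * eps1 * real N * A / gap"
    and T: "real T \<ge> Q * ln (A * B * real N powr amax)" and "T \<le> L"
  shows "2 * card {xs\<in>sel_seqs N L. \<forall>t\<le>T. C (abrd_run st p0 xs t) > 2 * K * Copt} \<le> N ^ L"
proof -
  let ?Bd = "{xs\<in>sel_seqs N L. \<forall>t\<le>T. C (abrd_run st p0 xs t) > 2 * K * Copt}"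
  define r where "r = 1 - 1 / Q"
  have Cp0: "C p0 \<le> rho * real N powr amax * Copt" by (rule initial_cost_le[OF N])
  have Copt: "Copt > 0" by (rule opt_cost_pos[OF N bad0])
  have Q_ge_1: "Q \<ge> 1" unfolding Q by (rule Q_ge_1[OF N])
  have r_nonneg: "r \<ge> 0" using Q_ge_1 by (simp add: r_def)
  have "1 * 1 * 1 \<le> A * B * real N powr amax"
    using A_ge_1 B_ge_1 N amax_gt_1 by (intro mult_mono) (auto simp: ge_one_powr_ge_zero)
  then have Z: "A * B * real N powr amax \<ge> 1" by simp
  have "real (card ?Bd) * (2 * K * Copt / B) \<le> real N ^ L * r ^ T * Phi p0"
  proof (rule card_persistently_bad_le[where S = Prof])
    show "\<And>p. p \<in> Prof \<Longrightarrow> C p > 2 * K * Copt \<Longrightarrow> (\<Sum>x<N. Phi (st p x)) \<le> real N * r * Phi p"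
      unfolding r_def Q using potential_shrinks N by blast
    show "\<And>p. p \<in> Prof \<Longrightarrow> C p > 2 * K * Copt \<Longrightarrow> 2 * K * Copt / B \<le> Phi p"
      using cost_le_Phi B_ge_1 by (fastforce simp: divide_le_eq mult.commute)
  qed (use Phi_pos less_imp_le step_in_profiles initial_profile(1) r_nonneg \<open>T \<le> L\<close> in auto)
  also have "\<dots> \<le> real N ^ L * r ^ T * (A * (rho * real N powr amax * Copt))"
    using Phi_le[OF initial_profile(1)] Cp0 A_ge_1 r_nonneg
    by (intro mult_left_mono order_trans[OF _ mult_left_mono[OF Cp0]]) auto
  also have "\<dots> = real N ^ L * rho * Copt / B * (r ^ T * (A * B * real N powr amax))"
    using B_ge_1 by (simp add: field_simps)
  also have "\<dots> \<le> real N ^ L * rho * Copt / B"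
    using one_minus_inverse_power_mult_le_one[OF Q_ge_1 Z T] Copt rho_ge B_ge_1 r_nonneg Z
    by (intro mult_right_le_one_le) (auto simp: r_def[symmetric])
  finally have "real (card ?Bd) * (2 * K) \<le> real N ^ L * rho"
    using Copt B_ge_1 by (simp add: field_simps)
  also have "\<dots> \<le> real N ^ L * K" using K_ge_rho[OF Copt] by (simp add: mult_left_mono)
  finally have "real (2 * card ?Bd) \<le> real (N ^ L)" using K_pos by (simp add: mult.commute)
  then show ?thesis by (simp only: of_nat_le_iff)
qed

lemma abrd_approximation:
  assumes Q: "Q = 2 * eps1 * real N * A / gap"
    and T: "T = nat \<lceil>Q * ln (A * B * real N powr amax)\<rceil>"
    and T': "T' = N * T\<^sup>2"
  shows "measure_pmf.prob (pmf_of_set (sel_seqs N T'))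
           {xs. Min ((\<lambda>t. C (abrd_run st p0 xs t)) ` {0..T'}) \<le> 2 * K * Copt} \<ge> 1 / 2"
proof (rule measure_pmf_of_set_ge_half[OF finite_sel_seqs])
  let ?S = "sel_seqs N T'"
  let ?X = "{xs. Min ((\<lambda>t. C (abrd_run st p0 xs t)) ` {0..T'}) \<le> 2 * K * Copt}"
  show "?S \<noteq> {}"
    using card_sel_seqs[of N T'] by (auto simp: T' simp del: card_sel_seqs)
  show "2 * card (?S - ?X) \<le> card ?S"
  proof (cases "C p0 \<le> 2 * K * Copt")
    case True
    then have "?S - ?X = {}" by (force simp: Min_le_iff)
    then show ?thesis by (simp only: card.empty mult_0_right zero_le)
  next
    case False
    have N: "N > 0"
      using False K_pos opt_cost_nonneg
      by (cases N) (auto simp: total_cost_def load_def gnd_cost_def)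
    \<comment> \<open>The first T of the T' steps already suffice.\<close>
    have "T \<le> T'" using N by (simp add: T' power2_eq_square)
    have "?S - ?X \<subseteq> {xs\<in>?S. \<forall>t\<le>T. C (abrd_run st p0 xs t) > 2 * K * Copt}"
      using \<open>T \<le> T'\<close> by (auto simp: Min_gr_iff not_le)
    then have "card (?S - ?X) \<le> card {xs\<in>?S. \<forall>t\<le>T. C (abrd_run st p0 xs t) > 2 * K * Copt}"
      by (intro card_mono) (auto simp: finite_sel_seqs)
    also have "2 * \<dots> \<le> N ^ T'"
      using False Q real_nat_ceiling_ge \<open>T \<le> T'\<close> unfolding T
      by (intro card_persistently_bad_runs_le[OF N]) auto
    finally show ?thesis by (simp add: card_sel_seqs)
  qed
qed

end

theorem theorem9p2:
  fixes E :: "'e set" and N :: nat and P :: "nat \<Rightarrow> 'e set set" and w :: "nat \<Rightarrow> 'e \<Rightarrow> nat"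
    and q :: nat and alpha :: "nat \<Rightarrow> real" and sig :: "'e \<Rightarrow> real" and xi :: "'e \<Rightarrow> nat \<Rightarrow> real"
    and rho :: real and orc :: "'e set set \<Rightarrow> ('e \<Rightarrow> real) \<Rightarrow> 'e set"
    and f :: "nat \<Rightarrow> 'e \<Rightarrow> (nat \<Rightarrow> 'e set) \<Rightarrow> real"
    and ft :: "nat \<Rightarrow> 'e \<Rightarrow> (nat \<Rightarrow> 'e set) \<Rightarrow> real"
    and BR :: "(nat \<Rightarrow> 'e set) \<Rightarrow> nat \<Rightarrow> 'e set"
    and Phi :: "(nat \<Rightarrow> 'e set) \<Rightarrow> real"
    and A B lam mu eps eps1 Q :: real and T T' :: nat
  assumes finE: "finite E"
    and P_sub: "\<forall>i<N. P i \<subseteq> Pow E \<and> P i \<noteq> {}"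
    and w_pos: "\<forall>i<N. \<forall>e\<in>E. w i e \<ge> 1"
    and q_pos: "q \<ge> 1"
    and alpha_gt: "\<forall>j\<in>{1..q}. alpha j > 1"
    and sigma_nn: "\<forall>e\<in>E. sig e \<ge> 0"
    and xi_nn: "\<forall>e\<in>E. \<forall>j\<in>{1..q}. xi e j \<ge> 0"
    and xi_pos: "\<forall>e\<in>E. \<exists>j\<in>{1..q}. xi e j > 0"
    and rho_ge: "rho \<ge> 1"
    and orc: "\<forall>i<N. reply_oracle_prop rho E (P i) (orc (P i))"
    and csm: "is_csm E N P w (gnd_cost q alpha sig xi) f"
    and pot: "is_potential E N P f Phi"
    and pot_bd: "bounded_potential E N P w (gnd_cost q alpha sig xi) Phi A B"
    and smooth: "is_smooth E N P w (gnd_cost q alpha sig xi) f lam mu"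
    and eps: "0 < eps" "eps < 1"
    and eps1_def: "eps1 = (1 + eps) / (1 - eps)"
    and mu_small: "mu < 1 / (rho * eps1\<^sup>2)"
    and ft_approx: "\<forall>p\<in>profiles N P. \<forall>i<N. \<forall>e\<in>E.
                      (1 - eps) * f i e p \<le> ft i e p \<and> ft i e p \<le> (1 + eps) * f i e p"
    and BR_spec: "\<forall>p\<in>profiles N P. \<forall>i<N. BR p i \<in> P i \<and>
                    (\<forall>r\<in>P i. indiv_cost E ft i (p(i := BR p i)) \<le> rho * indiv_cost E ft i (p(i := r)))"
    and Q_def: "Q = 2 * eps1 * real N * A / (1 - rho * eps1\<^sup>2 * mu)"
    and T_def: "T = nat \<lceil>Q * ln (A * B * real N powr Max (alpha ` {1..q}))\<rceil>"
    and T'_def: "T' = N * T\<^sup>2"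
  shows "measure_pmf.prob (pmf_of_set (sel_seqs N T'))
           {xs. Min ((\<lambda>t. total_cost E N w (gnd_cost q alpha sig xi)
                        (abrd_run (abrd_step N (indiv_cost E ft) BR eps1)
                                  (restrict (\<lambda>i. orc (P i) (\<lambda>e. gnd_cost q alpha sig xi e (w i e))) {..<N})
                                  xs t)) ` {0..T'})
                 \<le> 2 * rho * eps1\<^sup>2 * lam / (1 - rho * eps1\<^sup>2 * mu) * opt_cost E N P w (gnd_cost q alpha sig xi)}
         \<ge> 1 / 2"
proof -
  interpret gnd E N P w q alpha sig xi rho orc f ft BR Phi A B lam mu eps eps1
    by unfold_locales (rule assms)+
  have "2 * rho * eps1\<^sup>2 * lam / (1 - rho * eps1\<^sup>2 * mu) = 2 * K"
    by (simp add: K_def gap_def)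
  then show ?thesis
    using abrd_approximation[of Q T T'] Q_def T_def T'_def by (simp add: gap_def amax_def p0_def)
qed

end
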